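(* Let $k\ge 2$ and $r\ge 0$ be integers, and let $\vec m=(m_0,\dots,m_r)$ be a vector of nonnegative integers with at least one positive entry. Then \[ V(\vec m)\le k\log_{b(k)} W(\vec m),\qquad\text{where } b(k)=\frac{k^k}{(k-1)^{k-1}},\quad W(\vec m)=\sum_{i=0}^r m_i k^{2i}. \]
   Context: Let $N=\sum_i m_i$, $\mathcal{Y}=\{1,\dots,k\}$, $\mathcal{X}=[k]^N$, and experts $h_j(x)=x_j$, $j=1,\dots,N$, where $m_i$ of the experts are assigned budget $B(h_j)=i$. Let $\mathcal{P}_{\vec m}$ be the set of finite sequences of examples in $\mathcal{X}\times\mathcal{Y}$ for which some $h_j$ errs ($h_j(x)\ne y$) on at most $B(h_j)$ examples. $V(\vec m)=\mathsf{opt}_{\operatorname{bandit}}^{\operatorname{adap}}(\mathcal{P}_{\vec m})$, defined as follows. Bandit feedback game: each round an adaptive adversary chooses $x_t$ from the history; the learner chooses a distribution $\pi^{(t)}$ on $\mathcal{Y}$ (from history and $x_t$); the adversary, seeing $\pi^{(t)}$, chooses a distribution $\tau^{(t)}$; $\hat y_t\sim\pi^{(t)}$, $y_t\sim\tau^{(t)}$; the learner learns only whether $\hat y_t=y_t$. The adversary must ensure that whenever the history is realizable, every $y_t$ in the support of $\tau^{(t)}$ keeps it realizable, where a history of (instance, correct/incorrect, prediction) triples is realizable if some choice of true labels agreeing with the observations gives a sequence in $\mathcal{P}_{\vec m}$. $\mathsf{opt}_{\operatorname{bandit}}^{\operatorname{adap}}=\inf_{\text{learner}}\sup_{\text{adversary}}$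 expected number of mistakes ($\hat y_t\ne y_t$). *)

theory Defs
  imports "HOL-Probability.Probability"
begin

text \<open>An instance assigns a label to every expert: h_(i,c)(x) = x (i,c).\<close>

type_synonym expert = "nat \<times> nat"
type_synonym inst = "expert \<Rightarrow> nat"

definition experts :: "nat list \<Rightarrow> expert set" where
  "experts m = {(i, c). i < length m \<and> c < m ! i}"

definition budget :: "expert \<Rightarrow> nat" where
  "budget e = fst e"

definition labels :: "nat \<Rightarrow> nat set" where
  "labels k = {1..k}"

definition instances :: "nat list \<Rightarrow> nat \<Rightarrow> inst set" where
  "instances m k = experts m \<rightarrow>\<^sub>E labels k"

definition Pclass :: "nat list \<Rightarrow> nat \<Rightarrow> (inst \<times> nat) list set" where
  "Pclass m k = {s. (\<forall>t < length s. fst (s ! t) \<in> instances m k \<and> snd (s ! t) \<in> labels k) \<and>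
      (\<exists>e \<in> experts m. card {t. t < length s \<and> fst (s ! t) e \<noteq> snd (s ! t)} \<le> budget e)}"

text \<open>Observation histories: (instance, correct?, prediction).\<close>
type_synonym obs = "inst \<times> bool \<times> nat"

definition realizable :: "nat list \<Rightarrow> nat \<Rightarrow> obs list \<Rightarrow> bool" where
  "realizable m k h \<longleftrightarrow> (\<exists>ys. length ys = length h \<and>
      (\<forall>t < length h. fst (snd (h ! t)) \<longleftrightarrow> ys ! t = snd (snd (h ! t))) \<and>
      zip (map fst h) ys \<in> Pclass m k)"

type_synonym round = "inst \<times> nat pmf \<times> nat pmf \<times> nat \<times> nat"

definition observe :: "round list \<Rightarrow> obs list" where
  "observe h = map (\<lambda>(x, \<pi>, \<tau>, yh, y). (x, yh = y, yh)) h"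

definition mistakes :: "round list \<Rightarrow> nat" where
  "mistakes h = length (filter (\<lambda>(x, \<pi>, \<tau>, yh, y). yh \<noteq> y) h)"

type_synonym learner = "obs list \<Rightarrow> inst \<Rightarrow> nat pmf"
type_synonym adversary = "(round list \<Rightarrow> inst) \<times> (round list \<Rightarrow> nat pmf \<Rightarrow> nat pmf)"

definition valid_learner :: "nat \<Rightarrow> learner \<Rightarrow> bool" where
  "valid_learner k L \<longleftrightarrow> (\<forall>h x. set_pmf (L h x) \<subseteq> labels k)"

definition valid_adversary :: "nat list \<Rightarrow> nat \<Rightarrow> adversary \<Rightarrow> bool" where
  "valid_adversary m k A \<longleftrightarrow>
     (\<forall>h. fst A h \<in> instances m k) \<and>
     (\<forall>h \<pi>. set_pmf (snd A h \<pi>) \<subseteq> labels k \<and>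
        (realizable m k (observe h) \<longrightarrow>
          (\<forall>y \<in> set_pmf (snd A h \<pi>). \<forall>yh \<in> labels k.
             realizable m k (observe h @ [(fst A h, yh = y, yh)]))))"

definition play_round :: "learner \<Rightarrow> adversary \<Rightarrow> round list \<Rightarrow> round list pmf" where
  "play_round L A h =
     (let x = fst A h; \<pi> = L (observe h) x; \<tau> = snd A h \<pi> in
      do { yh \<leftarrow> \<pi>; y \<leftarrow> \<tau>; return_pmf (h @ [(x, \<pi>, \<tau>, yh, y)]) })"

fun play :: "learner \<Rightarrow> adversary \<Rightarrow> nat \<Rightarrow> round list pmf" where
  "play L A 0 = return_pmf []"
| "play L A (Suc T) = play L A T \<bind> play_round L A"

definition expected_mistakes :: "learner \<Rightarrow> adversary \<Rightarrow> nat \<Rightarrow> real" where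
  "expected_mistakes L A T = measure_pmf.expectation (play L A T) (\<lambda>h. real (mistakes h))"

definition V :: "nat list \<Rightarrow> nat \<Rightarrow> ereal" where
  "V m k = (INF L \<in> {L. valid_learner k L}. SUP A \<in> {A. valid_adversary m k A}.
              SUP T. ereal (expected_mistakes L A T))"

definition bk :: "nat \<Rightarrow> real" where
  "bk k = real k ^ k / real (k - 1) ^ (k - 1)"

definition W :: "nat list \<Rightarrow> nat \<Rightarrow> real" where
  "W m k = (\<Sum>i < length m. real (m ! i) * real k ^ (2 * i))"

end

theory Submission
  imports Defs
begin

text \<open>
  Give each expert e that is still within its budget the weight k^(2(B(e) - v)), where v counts
  the observations refuting e, and let the potential Phi be the total weight: it starts at W(m)
  and stays at least 1 while the history is realizable. If the experts agreeing with the
  prediction hold a share p of Phi, a correct prediction multiplies Phi by at most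
  1/k^2 + alpha p and a wrong one by at most 1 - alpha p, where alpha = 1 - 1/k^2.
  With c = k / ln b(k), the learner predicts deterministically a label whose wrong-prediction
  increment 1 - c alpha p is nonpositive, if there is one, and otherwise samples each label with
  probability inversely proportional to the gap between its wrong and correct increments. This
  makes mistakes + c ln Phi a supermartingale against every adaptive adversary; the numerical
  core is (k - 1)(1 - c alpha p) + c ln (1/k^2 + alpha p) <= 0, which is where b(k) comes from.
  Hence the expected number of mistakes is at most c ln W(m) = k log_b(k) W(m).
\<close>

section \<open>The constants\<close>

lemma ln_bk:
  assumes "k \<ge> 2"
  shows "ln (bk k) = real k * ln (real k) - real (k - 1) * ln (real (k - 1))"
  using assms by (simp add: bk_def ln_div ln_realpow)

lemma one_less_bk:
  assumes "k \<ge> 2"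
  shows "1 < bk k"
proof -
  have "real (k - 1) ^ (k - 1) < real k ^ (k - 1)"
    using assms by (intro power_strict_mono) auto
  also have "\<dots> \<le> real k ^ k"
    using assms by (intro power_increasing) auto
  finally show ?thesis
    unfolding bk_def using assms by simp
qed

lemma ln_2_le_3_4: "ln 2 \<le> (3/4 :: real)"
proof -
  have "(2 :: real) \<le> 1 + 3/4 + (3/4)\<^sup>2 / 2"
    by (simp add: power2_eq_square)
  also have "\<dots> \<le> exp (3/4)"
    by (rule exp_lower_Taylor_quadratic) simp
  finally have "ln 2 \<le> ln (exp (3/4 :: real))"
    by (subst ln_le_cancel_iff) auto
  then show ?thesis
    by simp
qed

lemma ln_le_add_ln:
  fixes a b z :: real
  assumes "0 < a" "0 < b" "0 < z" "a \<le> b * z"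
  shows "ln a \<le> ln b + ln z"
proof -
  have "ln a \<le> ln (b * z)"
    using assms by (subst ln_le_cancel_iff) auto
  then show ?thesis
    using assms by (simp add: ln_mult)
qed

lemma ln_pred_ge:
  assumes "k \<ge> 3"
  shows "real (k - 1) / real k \<le> ln (real (k - 1))"
proof (cases "k = 3")
  case True
  then show ?thesis
    using ln2_ge_two_thirds by simp
next
  case False
  then have "ln 3 \<le> ln (real (k - 1))"
    using assms by simp
  moreover have "real (k - 1) / real k \<le> 1"
    by (auto simp: divide_le_eq_1)
  ultimately show ?thesis
    using ln3_gt_1 by linarith
qed

lemma ln_bk_bound:
  assumes "k \<ge> 2"
  shows "real (k - 1) * ln (bk k) \<le> real k * (1 + ln (real (k - 1))) - real (k - 1) / real k"
proof (cases "k = 2")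
  case True
  then show ?thesis
    using ln_bk[of 2] ln_2_le_3_4 by simp
next
  case False
  have pred: "real (k - 1) = real k - 1"
    using assms by simp
  have "ln (real k / real (k - 1)) \<le> real k / real (k - 1) - 1"
    using assms by (intro ln_le_minus_one) auto
  also have "\<dots> = 1 / real (k - 1)"
    using assms unfolding pred by (simp add: field_simps)
  finally have ratio: "real (k - 1) * (ln (real k) - ln (real (k - 1))) \<le> 1"
    using assms by (simp add: ln_div field_simps)
  have "real (k - 1) * ln (bk k)
      = real (k - 1) * ln (real (k - 1))
        + real k * (real (k - 1) * (ln (real k) - ln (real (k - 1))))"
    using assms unfolding ln_bk[OF assms] pred by (simp add: algebra_simps)
  also have "\<dots> \<le> real (k - 1) * ln (real (k - 1)) + real k"
    using ratio by (simp add: mult_left_le)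
  also have "\<dots> \<le> real k * (1 + ln (real (k - 1))) - real (k - 1) / real k"
    using ln_pred_ge[of k] False assms unfolding pred by (simp add: algebra_simps)
  finally show ?thesis .
qed

definition alpha :: "nat \<Rightarrow> real" where
  "alpha k = 1 - 1 / (real k)\<^sup>2"

definition log_scale :: "nat \<Rightarrow> real" where
  "log_scale k = real k / ln (bk k)"

text \<open>Upper bounds on the increment of mistakes + log_scale k * ln potential in a round whose
  prediction, backed by a share p of the potential, turns out wrong resp. correct.\<close>

definition wrong_increment :: "nat \<Rightarrow> real \<Rightarrow> real" where
  "wrong_increment k p = 1 - log_scale k * alpha k * p"

definition right_increment :: "nat \<Rightarrow> real \<Rightarrow> real" where
  "right_increment k p = log_scale k * ln (1 / (real k)\<^sup>2 + alpha k * p)"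

lemma log_scale_pos:
  assumes "k \<ge> 2"
  shows "0 < log_scale k"
  unfolding log_scale_def using assms one_less_bk[OF assms] by simp

lemma correct_factor_bounds:
  assumes "k \<ge> 2" "0 \<le> p" "p \<le> 1"
  shows "0 < 1 / (real k)\<^sup>2 + alpha k * p" "1 / (real k)\<^sup>2 + alpha k * p \<le> 1"
proof -
  have "1 / (real k)\<^sup>2 \<le> 1"
    using assms by simp
  then have "0 \<le> alpha k"
    unfolding alpha_def by simp
  then have "0 \<le> alpha k * p" "alpha k * p \<le> alpha k"
    using assms by (simp_all add: mult_left_le)
  moreover have "0 < 1 / (real k)\<^sup>2" "1 / (real k)\<^sup>2 + alpha k = 1"
    using assms by (simp_all add: alpha_def)
  ultimately show "0 < 1 / (real k)\<^sup>2 + alpha k * p" "1 / (real k)\<^sup>2 + alpha k * p \<le> 1"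
    by linarith+
qed

lemma right_increment_nonpos:
  assumes "k \<ge> 2" "0 \<le> p" "p \<le> 1"
  shows "right_increment k p \<le> 0"
  using correct_factor_bounds[OF assms] log_scale_pos[OF assms(1)]
  unfolding right_increment_def by (simp add: mult_nonneg_nonpos)

lemma wrong_increment_gap:
  assumes k: "k \<ge> 2" and "0 \<le> p" "p \<le> 1"
  shows "real k * wrong_increment k p \<le> wrong_increment k p - right_increment k p"
proof -
  define z where "z = 1 / (real k)\<^sup>2 + alpha k * p"
  define c where "c = log_scale k"
  have z: "0 < z"
    unfolding z_def using correct_factor_bounds[OF assms] by simp
  have c: "0 < c"
    unfolding c_def using log_scale_pos[OF k] .
  have pred: "real (k - 1) = real k - 1"
    using k by simp
  \<comment> \<open>tangent line of ln at 1/(k - 1)\<close>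
  have "ln (real (k - 1) * z) \<le> real (k - 1) * z - 1"
    using z k by (intro ln_le_minus_one) simp
  then have "c * ln z \<le> c * (real (k - 1) * z - 1 - ln (real (k - 1)))"
    using z k c by (simp add: ln_mult)
  moreover have "real (k - 1) \<le> c * (1 + ln (real (k - 1)) - real (k - 1) / (real k)\<^sup>2)"
  proof -
    have "real k * (1 + ln (real (k - 1)) - real (k - 1) / (real k)\<^sup>2)
        = real k * (1 + ln (real (k - 1))) - real (k - 1) / real k"
      using k by (simp add: field_simps power2_eq_square)
    then have "real (k - 1) * ln (bk k)
        \<le> real k * (1 + ln (real (k - 1)) - real (k - 1) / (real k)\<^sup>2)"
      using ln_bk_bound[OF k] by simp
    then show ?thesis
      unfolding c_def log_scale_def using one_less_bk[OF k] by (simp add: field_simps)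
  qed
  ultimately have "real (k - 1) * (1 - c * alpha k * p) + c * ln z \<le> 0"
    unfolding z_def by (simp add: algebra_simps)
  then show ?thesis
    unfolding wrong_increment_def right_increment_def c_def z_def pred
    by (simp add: algebra_simps)
qed

section \<open>Inverse-gap weighting\<close>

lemma inverse_gap_weighting:
  fixes w r :: "'a \<Rightarrow> real"
  assumes fin: "finite L" and y: "y \<in> L"
    and pos: "\<And>j. j \<in> L \<Longrightarrow> 0 < w j"
    and gap: "\<And>j. j \<in> L \<Longrightarrow> real (card L) * w j \<le> w j - r j"
  shows "(\<Sum>j\<in>L. (if j = y then r j else w j) / (w j - r j)) \<le> 0"
proof -
  have "card L \<noteq> 0"
    using fin y by auto
  then have card: "1 \<le> real (card L)"
    by simp
  have d: "0 < w j - r j" if "j \<in> L" for j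
  proof -
    have "w j \<le> real (card L) * w j"
      using card pos[OF that] by simp
    then show ?thesis
      using gap[OF that] pos[OF that] by linarith
  qed
  have "(\<Sum>j\<in>L. (if j = y then r j else w j) / (w j - r j))
      = (\<Sum>j\<in>L. w j / (w j - r j)) - (\<Sum>j\<in>L. if j = y then 1 else 0)"
    unfolding sum_subtractf[symmetric]
  proof (intro sum.cong refl)
    fix j assume "j \<in> L"
    then show "(if j = y then r j else w j) / (w j - r j)
        = w j / (w j - r j) - (if j = y then 1 else 0)"
      using d[of j] by (cases "j = y") (simp_all add: field_simps)
  qed
  also have "(\<Sum>j\<in>L. w j / (w j - r j)) \<le> (\<Sum>j\<in>L. 1 / real (card L))"
    using gap d card by (intro sum_mono) (simp add: field_simps)
  finally show ?thesis
    using fin y by (auto split: if_splits)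
qed

definition normalized_pmf :: "'a list \<Rightarrow> ('a \<Rightarrow> real) \<Rightarrow> 'a pmf" where
  "normalized_pmf xs f = pmf_of_list (map (\<lambda>x. (x, f x / sum_list (map f xs))) xs)"

lemma
  assumes "distinct xs" "xs \<noteq> []" "\<And>x. x \<in> set xs \<Longrightarrow> 0 < f x"
  shows set_pmf_normalized_pmf: "set_pmf (normalized_pmf xs f) \<subseteq> set xs"
    and expectation_normalized_pmf:
      "measure_pmf.expectation (normalized_pmf xs f) g
        = (\<Sum>x\<in>set xs. f x * g x) / sum f (set xs)"
proof -
  define S where "S = sum f (set xs)"
  have S: "sum_list (map f xs) = S" "0 < S"
    unfolding S_def using assms by (simp_all add: sum_list_distinct_conv_sum_set sum_pos)
  have wf: "pmf_of_list_wf (map (\<lambda>x. (x, f x / sum_list (map f xs))) xs)"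
    using assms S
    by (intro pmf_of_list_wfI)
      (auto simp: comp_def sum_list_distinct_conv_sum_set sum_divide_distrib[symmetric] less_imp_le)
  show set_pmf: "set_pmf (normalized_pmf xs f) \<subseteq> set xs"
    unfolding normalized_pmf_def using set_pmf_of_list[OF wf] by (simp add: comp_def)
  have pmf: "pmf (normalized_pmf xs f) x = f x / S" if "x \<in> set xs" for x
  proof -
    have "pmf (normalized_pmf xs f) x
        = sum_list (map snd (filter (\<lambda>z. fst z = x)
            (map (\<lambda>x. (x, f x / sum_list (map f xs))) xs)))"
      unfolding normalized_pmf_def by (rule pmf_pmf_of_list[OF wf])
    also have "\<dots> = sum_list (map (\<lambda>y. f y / S) (filter (\<lambda>y. y = x) xs))"
      using S(1) by (simp add: filter_map comp_def)
    also have "filter (\<lambda>y. y = x) xs = [x]"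
      using assms(1) that by (induction xs) (auto simp: filter_empty_conv)
    finally show ?thesis
      by simp
  qed
  have "measure_pmf.expectation (normalized_pmf xs f) g
      = (\<Sum>x\<in>set xs. g x * pmf (normalized_pmf xs f) x)"
    using set_pmf by (intro integral_measure_pmf_real) auto
  also have "\<dots> = (\<Sum>x\<in>set xs. f x * g x) / S"
    unfolding sum_divide_distrib by (intro sum.cong) (simp_all add: pmf)
  finally show "measure_pmf.expectation (normalized_pmf xs f) g
      = (\<Sum>x\<in>set xs. f x * g x) / sum f (set xs)"
    unfolding S_def .
qed

lemma labels_eq_set_upt: "labels k = set [1..<Suc k]"
  unfolding labels_def by auto

definition predict :: "nat \<Rightarrow> (nat \<Rightarrow> real) \<Rightarrow> nat pmf" where
  "predict k p =
     (if \<exists>j\<in>labels k. wrong_increment k (p j) \<le> 0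
      then return_pmf (LEAST j. j \<in> labels k \<and> wrong_increment k (p j) \<le> 0)
      else normalized_pmf [1..<Suc k]
        (\<lambda>j. 1 / (wrong_increment k (p j) - right_increment k (p j))))"

lemma increment_gap_pos:
  assumes "k \<ge> 2" "0 \<le> p" "p \<le> 1" "0 < wrong_increment k p"
  shows "0 < wrong_increment k p - right_increment k p"
  using right_increment_nonpos[of k p] assms by simp

lemma predict_cases:
  obtains (safe) j
    where "j \<in> labels k" "wrong_increment k (p j) \<le> 0" "predict k p = return_pmf j"
  | (random) "\<forall>j\<in>labels k. 0 < wrong_increment k (p j)"
      "predict k p = normalized_pmf [1..<Suc k]
         (\<lambda>j. 1 / (wrong_increment k (p j) - right_increment k (p j)))"
proof (cases "\<exists>j\<in>labels k. wrong_increment k (p j) \<le> 0")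
  case True
  let ?safe = "\<lambda>j. j \<in> labels k \<and> wrong_increment k (p j) \<le> 0"
  have "?safe (Least ?safe)"
    using True by (metis (mono_tags, lifting) LeastI)
  then show ?thesis
    using True by (intro safe) (auto simp: predict_def)
next
  case False
  then show ?thesis
    by (intro random) (auto simp: predict_def)
qed

lemma set_pmf_predict:
  assumes k: "k \<ge> 2" and p: "\<And>j. j \<in> labels k \<Longrightarrow> 0 \<le> p j \<and> p j \<le> 1"
  shows "set_pmf (predict k p) \<subseteq> labels k"
proof (cases rule: predict_cases[of k p])
  case random
  have "\<forall>j\<in>set [1..<Suc k]. 0 < 1 / (wrong_increment k (p j) - right_increment k (p j))"
    using random(1) increment_gap_pos[OF k] p unfolding labels_eq_set_upt[symmetric] by simp
  then show ?thesis
    unfolding random(2) labels_eq_set_upt using k by (intro set_pmf_normalized_pmf) auto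
qed simp

lemma expectation_predict_nonpos:
  assumes k: "k \<ge> 2" and p: "\<And>j. j \<in> labels k \<Longrightarrow> 0 \<le> p j \<and> p j \<le> 1"
    and y: "y \<in> labels k"
    and g: "\<And>j. j \<in> labels k \<Longrightarrow>
      g j \<le> (if j = y then right_increment k (p j) else wrong_increment k (p j))"
  shows "measure_pmf.expectation (predict k p) g \<le> 0"
proof (cases rule: predict_cases[of k p])
  case (safe j)
  then show ?thesis
    using g[OF safe(1)] right_increment_nonpos[OF k, of "p j"] p[OF safe(1)] safe(2,3)
    by (auto split: if_splits)
next
  case random
  let ?d = "\<lambda>j. wrong_increment k (p j) - right_increment k (p j)"
  let ?bound = "\<lambda>j. if j = y then right_increment k (p j) else wrong_increment k (p j)"
  have d: "\<forall>j\<in>labels k. 0 < ?d j"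
    using random(1) increment_gap_pos[OF k] p by simp
  have "(\<Sum>j\<in>labels k. 1 / ?d j * g j) \<le> (\<Sum>j\<in>labels k. ?bound j / ?d j)"
  proof (intro sum_mono)
    fix j assume j: "j \<in> labels k"
    show "1 / ?d j * g j \<le> ?bound j / ?d j"
      using divide_right_mono[OF g[OF j] less_imp_le[OF bspec[OF d j]]] by simp
  qed
  also have "\<dots> \<le> 0"
    using y random wrong_increment_gap[OF k] p
    by (intro inverse_gap_weighting) (simp_all add: labels_def)
  finally have "(\<Sum>j\<in>labels k. 1 / ?d j * g j) / (\<Sum>j\<in>labels k. 1 / ?d j) \<le> 0"
    using d by (simp add: divide_nonpos_nonneg sum_nonneg less_imp_le)
  moreover have "measure_pmf.expectation (predict k p) g
      = (\<Sum>j\<in>labels k. 1 / ?d j * g j) / (\<Sum>j\<in>labels k. 1 / ?d j)"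
    unfolding random(2) labels_eq_set_upt using k d
    by (intro expectation_normalized_pmf) (auto simp: labels_eq_set_upt)
  ultimately show ?thesis
    by simp
qed

section \<open>The potential\<close>

text \<open>An observation (x, ok, yh) refutes expert e when e's label agrees with a prediction flagged
  wrong or disagrees with one flagged correct; under every labelling consistent with the
  history, each refutation is an error of e.\<close>

definition violations :: "obs list \<Rightarrow> expert \<Rightarrow> nat" where
  "violations H e = length (filter (\<lambda>(x, ok, yh). (x e = yh) \<noteq> ok) H)"

definition weight :: "nat \<Rightarrow> obs list \<Rightarrow> expert \<Rightarrow> real" where
  "weight k H e =
     (if violations H e \<le> budget e then real k ^ (2 * (budget e - violations H e)) else 0)"

definition potential :: "nat list \<Rightarrow> nat \<Rightarrow> obs list \<Rightarrow> real" where
  "potential m k H = (\<Sum>e\<in>experts m. weight k H e)"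

definition label_weight :: "nat list \<Rightarrow> nat \<Rightarrow> obs list \<Rightarrow> inst \<Rightarrow> nat \<Rightarrow> real"
  where
  "label_weight m k H x j = (\<Sum>e\<in>experts m. if x e = j then weight k H e else 0)"

definition label_share :: "nat list \<Rightarrow> nat \<Rightarrow> obs list \<Rightarrow> inst \<Rightarrow> nat \<Rightarrow> real"
  where
  "label_share m k H x j = label_weight m k H x j / potential m k H"

lemma experts_Sigma: "experts m = (SIGMA i:{..<length m}. {..<m ! i})"
  unfolding experts_def by auto

lemma finite_experts: "finite (experts m)"
  unfolding experts_Sigma by auto

lemma weight_nonneg: "0 \<le> weight k H e"
  unfolding weight_def by simp

lemma label_weight_bounds:
  "0 \<le> label_weight m k H x j" "label_weight m k H x j \<le> potential m k H"
  unfolding label_weight_def potential_def by (auto intro!: sum_nonneg sum_mono simp: weight_nonneg)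

lemma label_share_bounds: "0 \<le> label_share m k H x j" "label_share m k H x j \<le> 1"
  unfolding label_share_def using label_weight_bounds[of m k H x j]
  by (auto simp: divide_le_eq_1)

lemma potential_Nil: "potential m k [] = W m k"
proof -
  have "potential m k [] = (\<Sum>e\<in>experts m. real k ^ (2 * budget e))"
    unfolding potential_def weight_def violations_def by simp
  also have "\<dots> = (\<Sum>i<length m. \<Sum>c<m ! i. real k ^ (2 * i))"
    unfolding experts_Sigma by (subst sum.Sigma) (simp_all add: budget_def split_beta)
  also have "\<dots> = W m k"
    unfolding W_def by simp
  finally show ?thesis .
qed

lemma weight_snoc_le:
  assumes "k \<ge> 1"
  shows "weight k (H @ [(x, ok, yh)]) e
    \<le> (if (x e = yh) \<noteq> ok then weight k H e / (real k)\<^sup>2 else weight k H e)"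
proof (cases "(x e = yh) \<noteq> ok")
  case True
  then have viol: "violations (H @ [(x, ok, yh)]) e = Suc (violations H e)"
    unfolding violations_def by simp
  show ?thesis
  proof (cases "Suc (violations H e) \<le> budget e")
    case True
    then have "2 * (budget e - violations H e) = 2 * (budget e - Suc (violations H e)) + 2"
      by simp
    then have "real k ^ (2 * (budget e - violations H e))
        = real k ^ (2 * (budget e - Suc (violations H e))) * (real k)\<^sup>2"
      by (simp add: power_add power2_eq_square)
    then show ?thesis
      using True \<open>(x e = yh) \<noteq> ok\<close> assms unfolding weight_def viol by simp
  qed (use True weight_nonneg[of k H e] in \<open>simp add: weight_def viol\<close>)
qed (simp add: weight_def violations_def)

lemma potential_snoc_le:
  assumes "k \<ge> 1"
  shows "potential m k (H @ [(x, ok, yh)])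
    \<le> potential m k H
      - alpha k * (\<Sum>e\<in>experts m. if (x e = yh) \<noteq> ok then weight k H e else 0)"
proof -
  let ?refuted = "\<lambda>e. (x e = yh) \<noteq> ok"
  have "potential m k (H @ [(x, ok, yh)])
      \<le> (\<Sum>e\<in>experts m. if ?refuted e then weight k H e / (real k)\<^sup>2 else weight k H e)"
    unfolding potential_def by (intro sum_mono weight_snoc_le assms)
  also have "\<dots>
      = (\<Sum>e\<in>experts m. weight k H e - alpha k * (if ?refuted e then weight k H e else 0))"
    by (intro sum.cong) (auto simp: alpha_def field_simps)
  finally show ?thesis
    unfolding potential_def by (simp add: sum_subtractf sum_distrib_left)
qed

lemma potential_snoc_correct:
  assumes "k \<ge> 1"
  shows "potential m k (H @ [(x, True, j)])
    \<le> potential m k H * (1 / (real k)\<^sup>2 + alpha k * label_share m k H x j)"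
proof -
  have "(\<Sum>e\<in>experts m. if (x e = j) \<noteq> True then weight k H e else 0)
      = potential m k H - label_weight m k H x j"
    unfolding potential_def label_weight_def sum_subtractf[symmetric] by (intro sum.cong) auto
  moreover have "potential m k H * (1 / (real k)\<^sup>2 + alpha k * label_share m k H x j)
      = potential m k H - alpha k * (potential m k H - label_weight m k H x j)"
    using label_weight_bounds[of m k H x j]
    by (cases "potential m k H = 0") (auto simp: label_share_def alpha_def field_simps)
  ultimately show ?thesis
    using potential_snoc_le[OF assms, of m H x True j] by simp
qed

lemma potential_snoc_wrong:
  assumes "k \<ge> 1"
  shows "potential m k (H @ [(x, False, j)]) \<le> potential m k H * (1 - alpha k * label_share m k H x j)"
proof -
  have "(\<Sum>e\<in>experts m. if (x e = j) \<noteq> False then weight k H e else 0)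
      = label_weight m k H x j"
    unfolding label_weight_def by simp
  moreover have "potential m k H * (1 - alpha k * label_share m k H x j)
      = potential m k H - alpha k * label_weight m k H x j"
    using label_weight_bounds[of m k H x j]
    by (cases "potential m k H = 0") (auto simp: label_share_def field_simps)
  ultimately show ?thesis
    using potential_snoc_le[OF assms, of m H x False j] by simp
qed

lemma realizable_imp_surviving_expert:
  assumes "realizable m k H"
  obtains e where "e \<in> experts m" "violations H e \<le> budget e"
proof -
  obtain ys where ys: "length ys = length H"
      "\<And>t. t < length H \<Longrightarrow> fst (snd (H ! t)) \<longleftrightarrow> ys ! t = snd (snd (H ! t))"
      "zip (map fst H) ys \<in> Pclass m k"
    using assms unfolding realizable_def by blast
  define s where "s = zip (map fst H) ys"
  have "{t. t < length s \<and> fst (s ! t) e \<noteq> snd (s ! t)}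
      = {t. t < length H \<and> fst (H ! t) e \<noteq> ys ! t}" for e
    using ys(1) unfolding s_def by auto
  with ys(3)[folded s_def] obtain e where e: "e \<in> experts m"
      "card {t. t < length H \<and> fst (H ! t) e \<noteq> ys ! t} \<le> budget e"
    unfolding Pclass_def by auto
  have "violations H e
      = card {t. t < length H \<and> (fst (H ! t) e = snd (snd (H ! t))) \<noteq> fst (snd (H ! t))}"
    unfolding violations_def length_filter_conv_card by (simp add: split_beta)
  also have "\<dots> \<le> card {t. t < length H \<and> fst (H ! t) e \<noteq> ys ! t}"
    using ys(2) by (intro card_mono) auto
  finally show ?thesis
    using that e by simp
qed

lemma one_le_potential:
  assumes "k \<ge> 1" "realizable m k H"
  shows "1 \<le> potential m k H"
proof -
  obtain e where e: "e \<in> experts m" "violations H e \<le> budget e"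
    using realizable_imp_surviving_expert[OF assms(2)] .
  have "1 \<le> weight k H e"
    unfolding weight_def using e(2) assms(1) by simp
  also have "\<dots> \<le> potential m k H"
    unfolding potential_def using e(1) finite_experts weight_nonneg by (intro member_le_sum) auto
  finally show ?thesis .
qed

lemma log_potential_increment:
  assumes k: "k \<ge> 2" and H: "realizable m k H" and H': "realizable m k (H @ [(x, yh = y, yh)])"
  defines "p \<equiv> label_share m k H x yh"
  shows "of_bool (yh \<noteq> y)
      + log_scale k * (ln (potential m k (H @ [(x, yh = y, yh)])) - ln (potential m k H))
    \<le> (if yh = y then right_increment k p else wrong_increment k p)"
proof -
  have P: "0 < potential m k H" "0 < potential m k (H @ [(x, yh = y, yh)])"
    using one_le_potential[of k m] H H' k by fastforce+
  have z: "0 < 1 / (real k)\<^sup>2 + alpha k * p" "1 / (real k)\<^sup>2 + alpha k * p \<le> 1"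
    unfolding p_def using correct_factor_bounds[OF k] label_share_bounds by blast+
  have c: "0 < log_scale k"
    using log_scale_pos[OF k] .
  show ?thesis
  proof (cases "yh = y")
    case True
    have "potential m k (H @ [(x, yh = y, yh)])
        \<le> potential m k H * (1 / (real k)\<^sup>2 + alpha k * p)"
      unfolding p_def True using potential_snoc_correct k by simp
    then have "ln (potential m k (H @ [(x, yh = y, yh)]))
        \<le> ln (potential m k H) + ln (1 / (real k)\<^sup>2 + alpha k * p)"
      using P z by (intro ln_le_add_ln) auto
    then show ?thesis
      using True c unfolding right_increment_def by (simp add: right_diff_distrib[symmetric])
  next
    case False
    have "0 < 1 / (real k)\<^sup>2"
      using k by simp
    then have q: "0 < 1 - alpha k * p"
      using z(2) by linarith
    have "potential m k (H @ [(x, yh = y, yh)]) \<le> potential m k H * (1 - alpha k * p)"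
      unfolding p_def using False potential_snoc_wrong k by simp
    then have "ln (potential m k (H @ [(x, yh = y, yh)])) \<le> ln (potential m k H) + ln (1 - alpha k * p)"
      using P q by (intro ln_le_add_ln) auto
    also have "ln (1 - alpha k * p) \<le> - alpha k * p"
      using ln_le_minus_one[OF q] by simp
    finally have "log_scale k * (ln (potential m k (H @ [(x, yh = y, yh)])) - ln (potential m k H))
        \<le> log_scale k * (- alpha k * p)"
      using c by (intro mult_left_mono) auto
    then show ?thesis
      using False unfolding wrong_increment_def by simp
  qed
qed

section \<open>The game\<close>

lemma expectation_bind_le:
  fixes f :: "'b \<Rightarrow> real" and g :: "'a \<Rightarrow> real"
  assumes fin: "finite (set_pmf M)" "\<And>a. a \<in> set_pmf M \<Longrightarrow> finite (set_pmf (N a))"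
    and le: "\<And>a. a \<in> set_pmf M \<Longrightarrow> measure_pmf.expectation (N a) f \<le> g a"
  shows "measure_pmf.expectation (M \<bind> N) f \<le> measure_pmf.expectation M g"
proof -
  have "measure_pmf.expectation (M \<bind> N) f
      = (\<Sum>a\<in>set_pmf M. pmf M a * measure_pmf.expectation (N a) f)"
    using fin by (subst pmf_expectation_bind[of "set_pmf M"]) auto
  also have "\<dots> \<le> (\<Sum>a\<in>set_pmf M. g a * pmf M a)"
  proof (intro sum_mono)
    fix a assume "a \<in> set_pmf M"
    then have "pmf M a * measure_pmf.expectation (N a) f \<le> pmf M a * g a"
      using le by (intro mult_left_mono) auto
    then show "pmf M a * measure_pmf.expectation (N a) f \<le> g a * pmf M a"
      by (simp add: mult.commute)
  qed
  also have "\<dots> = measure_pmf.expectation M g"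
    using fin by (intro integral_measure_pmf_real[symmetric]) auto
  finally show ?thesis .
qed

lemma expectation_play_le:
  fixes F :: "round list \<Rightarrow> real"
  assumes "I []"
    and finite: "\<And>h. I h \<Longrightarrow> finite (set_pmf (play_round L A h))"
    and invariant: "\<And>h g. I h \<Longrightarrow> g \<in> set_pmf (play_round L A h) \<Longrightarrow> I g"
    and decrease: "\<And>h. I h \<Longrightarrow> measure_pmf.expectation (play_round L A h) F \<le> F h"
  shows "finite (set_pmf (play L A T))" "\<forall>h\<in>set_pmf (play L A T). I h"
    "measure_pmf.expectation (play L A T) F \<le> F []"
proof (induction T)
  case 0
  show "finite (set_pmf (play L A 0))" "\<forall>h\<in>set_pmf (play L A 0). I h"
    "measure_pmf.expectation (play L A 0) F \<le> F []"
    using \<open>I []\<close> by simp_all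
next
  case (Suc T)
  then show "finite (set_pmf (play L A (Suc T)))" "\<forall>h\<in>set_pmf (play L A (Suc T)). I h"
    using finite invariant by auto
  have "measure_pmf.expectation (play L A (Suc T)) F \<le> measure_pmf.expectation (play L A T) F"
    unfolding play.simps using Suc.IH finite decrease by (intro expectation_bind_le) auto
  then show "measure_pmf.expectation (play L A (Suc T)) F \<le> F []"
    using Suc.IH by simp
qed

definition potential_learner :: "nat list \<Rightarrow> nat \<Rightarrow> learner" where
  "potential_learner m k H x = predict k (label_share m k H x)"

lemma valid_potential_learner: "k \<ge> 2 \<Longrightarrow> valid_learner k (potential_learner m k)"
  unfolding valid_learner_def potential_learner_def using set_pmf_predict label_share_bounds by blast

definition game_potential :: "nat list \<Rightarrow> nat \<Rightarrow> round list \<Rightarrow> real" where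
  "game_potential m k h = real (mistakes h) + log_scale k * ln (potential m k (observe h))"

lemma observe_snoc: "observe (h @ [(x, \<pi>, \<tau>, yh, y)]) = observe h @ [(x, yh = y, yh)]"
  unfolding observe_def by simp

lemma mistakes_snoc: "mistakes (h @ [(x, \<pi>, \<tau>, yh, y)]) = mistakes h + of_bool (yh \<noteq> y)"
  unfolding mistakes_def by simp

lemma expectation_potential_learner_step:
  assumes k: "k \<ge> 2" and H: "realizable m k H" and y: "y \<in> labels k"
    and H': "\<And>yh. yh \<in> labels k \<Longrightarrow> realizable m k (H @ [(x, yh = y, yh)])"
  shows "measure_pmf.expectation (potential_learner m k H x)
      (\<lambda>yh. of_bool (yh \<noteq> y) + log_scale k * ln (potential m k (H @ [(x, yh = y, yh)])))
    \<le> log_scale k * ln (potential m k H)"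
proof -
  have "measure_pmf.expectation (potential_learner m k H x)
      (\<lambda>yh. of_bool (yh \<noteq> y) + log_scale k * ln (potential m k (H @ [(x, yh = y, yh)]))
        - log_scale k * ln (potential m k H)) \<le> 0"
    unfolding potential_learner_def
  proof (rule expectation_predict_nonpos[OF k _ y])
    show "0 \<le> label_share m k H x j \<and> label_share m k H x j \<le> 1" for j
      using label_share_bounds by blast
    fix yh assume "yh \<in> labels k"
    then show "of_bool (yh \<noteq> y) + log_scale k * ln (potential m k (H @ [(x, yh = y, yh)]))
          - log_scale k * ln (potential m k H)
        \<le> (if yh = y then right_increment k (label_share m k H x yh)
           else wrong_increment k (label_share m k H x yh))"
      using log_potential_increment[OF k H H'] by (simp add: algebra_simps)
  qed
  moreover have "set_pmf (potential_learner m k H x) \<subseteq> labels k"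
    using valid_potential_learner[OF k] unfolding valid_learner_def by blast
  then have "finite (set_pmf (potential_learner m k H x))"
    by (rule finite_subset) (simp add: labels_def)
  ultimately show ?thesis
    by (simp add: integrable_measure_pmf_finite)
qed

lemma play_round_potential_learner:
  assumes k: "k \<ge> 2" and A: "valid_adversary m k A" and h: "realizable m k (observe h)"
  defines "R \<equiv> play_round (potential_learner m k) A h"
  shows "finite (set_pmf R)" "\<And>g. g \<in> set_pmf R \<Longrightarrow> realizable m k (observe g)"
    "measure_pmf.expectation R (game_potential m k) \<le> game_potential m k h"
proof -
  define x where "x = fst A h"
  define \<pi> where "\<pi> = potential_learner m k (observe h) x"
  define \<tau> where "\<tau> = snd A h \<pi>"
  define next_round where "next_round y yh = h @ [(x, \<pi>, \<tau>, yh, y)]" for y yh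
  have R: "R = \<tau> \<bind> (\<lambda>y. map_pmf (next_round y) \<pi>)"
    unfolding R_def play_round_def Let_def map_pmf_def next_round_def x_def \<pi>_def \<tau>_def
    by (rule bind_commute_pmf)
  have \<pi>: "set_pmf \<pi> \<subseteq> labels k"
    using valid_potential_learner[OF k] unfolding valid_learner_def \<pi>_def by blast
  have \<tau>: "set_pmf \<tau> \<subseteq> labels k"
    using A unfolding valid_adversary_def \<tau>_def by blast
  have realizable_next: "realizable m k (observe h @ [(x, yh = y, yh)])"
    if "y \<in> set_pmf \<tau>" "yh \<in> labels k" for y yh
    using A h that unfolding valid_adversary_def \<tau>_def x_def by blast
  have fin: "finite (set_pmf \<pi>)" "finite (set_pmf \<tau>)"
    using \<pi> \<tau> finite_subset by (auto simp: labels_def)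
  then show "finite (set_pmf R)"
    unfolding R by simp
  show "realizable m k (observe g)" if "g \<in> set_pmf R" for g
    using that realizable_next \<pi> unfolding R next_round_def by (auto simp: observe_snoc)
  have "measure_pmf.expectation (map_pmf (next_round y) \<pi>) (game_potential m k)
      \<le> game_potential m k h" if y: "y \<in> set_pmf \<tau>" for y
  proof -
    let ?f = "\<lambda>yh. of_bool (yh \<noteq> y) + log_scale k * ln (potential m k (observe h @ [(x, yh = y, yh)]))"
    have "measure_pmf.expectation \<pi> ?f \<le> log_scale k * ln (potential m k (observe h))"
      unfolding \<pi>_def using expectation_potential_learner_step[OF k h _ realizable_next[OF y]] y \<tau>
      by blast
    moreover have "measure_pmf.expectation (map_pmf (next_round y) \<pi>) (game_potential m k)
        = real (mistakes h) + measure_pmf.expectation \<pi> ?f"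
      unfolding next_round_def game_potential_def observe_snoc mistakes_snoc integral_map_pmf
      using fin(1) by (simp add: integrable_measure_pmf_finite add.assoc)
    ultimately show ?thesis
      unfolding game_potential_def by simp
  qed
  then have "measure_pmf.expectation R (game_potential m k)
      \<le> measure_pmf.expectation \<tau> (\<lambda>_. game_potential m k h)"
    unfolding R using fin by (intro expectation_bind_le) auto
  then show "measure_pmf.expectation R (game_potential m k) \<le> game_potential m k h"
    by simp
qed

lemma realizable_Nil:
  assumes "\<exists>i < length m. m ! i > 0"
  shows "realizable m k []"
proof -
  obtain i where "i < length m" "m ! i > 0"
    using assms by blast
  then have "(i, 0) \<in> experts m"
    unfolding experts_def by simp
  then have "[] \<in> Pclass m k"
    unfolding Pclass_def by force
  then show ?thesis
    unfolding realizable_def by simp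
qed

lemma expected_mistakes_potential_learner_le:
  assumes k: "k \<ge> 2" and A: "valid_adversary m k A" and m: "\<exists>i < length m. m ! i > 0"
  shows "expected_mistakes (potential_learner m k) A T \<le> log_scale k * ln (W m k)"
proof -
  let ?P = "play (potential_learner m k) A T"
  have "realizable m k (observe [])"
    using realizable_Nil[OF m] by (simp add: observe_def)
  then have play: "finite (set_pmf ?P)" "\<forall>h\<in>set_pmf ?P. realizable m k (observe h)"
      "measure_pmf.expectation ?P (game_potential m k) \<le> game_potential m k []"
    using play_round_potential_learner[OF k A]
    by (rule expectation_play_le[where I = "\<lambda>h. realizable m k (observe h)"]; blast)+
  have "real (mistakes h) \<le> game_potential m k h" if "h \<in> set_pmf ?P" for h
  proof -
    have "1 \<le> potential m k (observe h)"
      using play(2) that k by (intro one_le_potential) simp_all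
    then have "0 \<le> log_scale k * ln (potential m k (observe h))"
      using log_scale_pos[OF k] by simp
    then show ?thesis
      unfolding game_potential_def by simp
  qed
  then have "expected_mistakes (potential_learner m k) A T
      \<le> measure_pmf.expectation ?P (game_potential m k)"
    unfolding expected_mistakes_def
    by (intro integral_mono_AE integrable_measure_pmf_finite play(1)) (simp add: AE_measure_pmf_iff)
  also have "\<dots> \<le> game_potential m k []"
    using play(3) .
  also have "game_potential m k [] = log_scale k * ln (W m k)"
    by (simp add: game_potential_def mistakes_def observe_def potential_Nil)
  finally show ?thesis .
qed

theorem lemma4p8:
  fixes k :: nat and m :: "nat list"
  assumes "k \<ge> 2" and "m \<noteq> []" and "\<exists>i < length m. m ! i > 0"
  shows "V m k \<le> ereal (real k * log (bk k) (W m k))"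
proof -
  let ?L = "potential_learner m k"
  have "V m k \<le> (SUP A \<in> {A. valid_adversary m k A}. SUP T. ereal (expected_mistakes ?L A T))"
    unfolding V_def using valid_potential_learner[OF assms(1)] by (intro INF_lower) simp
  also have "\<dots> \<le> ereal (log_scale k * ln (W m k))"
    using expected_mistakes_potential_learner_le[OF assms(1) _ assms(3)] by (intro SUP_least) simp
  also have "log_scale k * ln (W m k) = real k * log (bk k) (W m k)"
    unfolding log_scale_def log_def by simp
  finally show ?thesis .
qed

end
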